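(* Let $(S,\wedge,\vee)$ be a skew lattice that is both strongly distributive and co-strongly distributive. Then $S$ is a strong distributive solution of the Yang–Baxter equation, and the associated map $r(x,y)=(x\wedge y,x\vee y)$ satisfies $r^3=r$.
   Context: A skew lattice is a set $S$ with two binary operations $\wedge,\vee$, each idempotent and associative, satisfying the absorption laws $x\wedge(x\vee y)=x=x\vee(x\wedge y)$ and $(x\wedge y)\vee y=y=(x\vee y)\wedge y$ for all $x,y\in S$. $S$ is strongly distributive if it satisfies $(x\vee y)\wedge z=(x\wedge z)\vee(y\wedge z)$ and $x\wedge(y\vee z)=(x\wedge y)\vee(x\wedge z)$; it is co-strongly distributive if it satisfies $(x\wedge y)\vee z=(x\vee z)\wedge(y\vee z)$ and $x\vee(y\wedge z)=(x\vee y)\wedge(x\vee z)$. A map $r:X\times X\to X\times X$ is a set-theoretic solution of the Yang–Baxter equation if $(r\times\mathrm{id})\circ(\mathrm{id}\times r)\circ(r\times\mathrm{id})=(\mathrm{id}\times r)\circ(r\times\mathrm{id})\circ(\mathrm{id}\times r)$. A skew lattice $S$ is a strong distributive solution if the map $r(x,y)=(x\wedge y,x\vee y)$ on $S\times S$ is a set-theoretic solution of the Yang–Baxter equation. *)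

theory Defs
  imports Main
begin

definition skew_lattice :: "('a \<Rightarrow> 'a \<Rightarrow> 'a) \<Rightarrow> ('a \<Rightarrow> 'a \<Rightarrow> 'a) \<Rightarrow> bool" where
  "skew_lattice meet join \<longleftrightarrow>
     (\<forall>x. meet x x = x) \<and> (\<forall>x. join x x = x) \<and>
     (\<forall>x y z. meet (meet x y) z = meet x (meet y z)) \<and>
     (\<forall>x y z. join (join x y) z = join x (join y z)) \<and>
     (\<forall>x y. meet x (join x y) = x \<and> join x (meet x y) = x) \<and>
     (\<forall>x y. join (meet x y) y = y \<and> meet (join x y) y = y)"

definition strongly_distributive :: "('a \<Rightarrow> 'a \<Rightarrow> 'a) \<Rightarrow> ('a \<Rightarrow> 'a \<Rightarrow> 'a) \<Rightarrow> bool" where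
  "strongly_distributive meet join \<longleftrightarrow>
     (\<forall>x y z. meet (join x y) z = join (meet x z) (meet y z)) \<and>
     (\<forall>x y z. meet x (join y z) = join (meet x y) (meet x z))"

definition co_strongly_distributive :: "('a \<Rightarrow> 'a \<Rightarrow> 'a) \<Rightarrow> ('a \<Rightarrow> 'a \<Rightarrow> 'a) \<Rightarrow> bool" where
  "co_strongly_distributive meet join \<longleftrightarrow>
     (\<forall>x y z. join (meet x y) z = meet (join x z) (join y z)) \<and>
     (\<forall>x y z. join x (meet y z) = meet (join x y) (join x z))"

definition is_YB_solution :: "('a \<times> 'a \<Rightarrow> 'a \<times> 'a) \<Rightarrow> bool" where
  "is_YB_solution r \<longleftrightarrow>
     (let r12 = (\<lambda>(x, y, z). (case r (x, y) of (u, v) \<Rightarrow> (u, v, z)));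
          r23 = (\<lambda>(x, y, z). (case r (y, z) of (u, v) \<Rightarrow> (x, u, v)))
      in r12 \<circ> r23 \<circ> r12 = r23 \<circ> r12 \<circ> r23)"

definition skew_map :: "('a \<Rightarrow> 'a \<Rightarrow> 'a) \<Rightarrow> ('a \<Rightarrow> 'a \<Rightarrow> 'a) \<Rightarrow> 'a \<times> 'a \<Rightarrow> 'a \<times> 'a" where
  "skew_map meet join = (\<lambda>(x, y). (meet x y, join x y))"

definition strong_distributive_solution :: "('a \<Rightarrow> 'a \<Rightarrow> 'a) \<Rightarrow> ('a \<Rightarrow> 'a \<Rightarrow> 'a) \<Rightarrow> bool" where
  "strong_distributive_solution meet join \<longleftrightarrow>
     skew_lattice meet join \<and> is_YB_solution (skew_map meet join)"

end

theory Submission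
  imports Defs
begin

text \<open>Writing \<open>r(x, y) = (x \<sqinter> y, x \<squnion> y)\<close>, both sides of the braid relation send
  \<open>(x, y, z)\<close> to a triple whose first component is a triple meet, whose last component is a
  triple join, and whose middle component mixes both operations. Strong distributivity lets the
  meet side absorb the factor \<open>x \<squnion> y\<close>, co-strong distributivity lets the join side absorb
  \<open>y \<sqinter> z\<close>, and the two together give the exchange law needed in the middle. The same two
  absorption laws also give \<open>r\<^sup>3 = r\<close>.\<close>

lemma is_YB_solution_pair_iff:
  "is_YB_solution (\<lambda>(x, y). (f x y, g x y)) \<longleftrightarrow>
     (\<forall>x y z. f (f x y) (f (g x y) z) = f x (f y z) \<and>
              g (f x y) (f (g x y) z) = f (g x (f y z)) (g y z) \<and>
              g (g x y) z = g (g x (f y z)) (g y z))"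
  unfolding is_YB_solution_def Let_def fun_eq_iff by auto

locale skew_lat =
  fixes meet :: "'a \<Rightarrow> 'a \<Rightarrow> 'a" (infixl "\<sqinter>" 70)
    and join :: "'a \<Rightarrow> 'a \<Rightarrow> 'a" (infixl "\<squnion>" 65)
  assumes skew_lattice: "skew_lattice meet join"
begin

lemma meet_assoc: "x \<sqinter> y \<sqinter> z = x \<sqinter> (y \<sqinter> z)"
  and join_assoc: "x \<squnion> y \<squnion> z = x \<squnion> (y \<squnion> z)"
  and meet_join_absorb: "x \<sqinter> (x \<squnion> y) = x"
  and join_meet_absorb: "x \<squnion> x \<sqinter> y = x"
  and join_meet_absorb': "x \<sqinter> y \<squnion> y = y"
  using skew_lattice unfolding skew_lattice_def by auto

end

locale strongly_distributive_skew_lat = skew_lat +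
  assumes strongly_distributive: "strongly_distributive meet join"
begin

lemma meet_join_distrib: "(x \<squnion> y) \<sqinter> z = x \<sqinter> z \<squnion> y \<sqinter> z"
  and meet_join_distrib': "x \<sqinter> (y \<squnion> z) = x \<sqinter> y \<squnion> x \<sqinter> z"
  using strongly_distributive unfolding strongly_distributive_def by auto

lemma meet_join_meet_absorb: "x \<sqinter> y \<sqinter> ((x \<squnion> y) \<sqinter> z) = x \<sqinter> y \<sqinter> z"
  by (metis meet_join_absorb join_meet_absorb' meet_join_distrib meet_join_distrib')

end

locale co_strongly_distributive_skew_lat = skew_lat +
  assumes co_strongly_distributive: "co_strongly_distributive meet join"
begin

lemma join_meet_distrib: "x \<sqinter> y \<squnion> z = (x \<squnion> z) \<sqinter> (y \<squnion> z)"
  using co_strongly_distributive unfolding co_strongly_distributive_def by auto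

lemma join_meet_join_absorb: "x \<squnion> y \<sqinter> z \<squnion> (y \<squnion> z) = x \<squnion> y \<squnion> z"
  by (metis join_assoc join_meet_absorb join_meet_absorb' join_meet_distrib)

end

locale bi_distributive_skew_lat =
  strongly_distributive_skew_lat + co_strongly_distributive_skew_lat
begin

lemma meet_join_exchange: "x \<sqinter> y \<squnion> (x \<squnion> y) \<sqinter> z = (x \<squnion> y \<sqinter> z) \<sqinter> (y \<squnion> z)"
  by (metis join_assoc join_meet_absorb join_meet_distrib meet_join_distrib meet_join_distrib')

lemma skew_map_is_YB_solution: "is_YB_solution (skew_map meet join)"
  unfolding skew_map_def is_YB_solution_pair_iff
  using meet_join_meet_absorb meet_join_exchange join_meet_join_absorb
  by (simp add: meet_assoc join_assoc)

lemma skew_map_cube: "skew_map meet join \<circ> skew_map meet join \<circ> skew_map meet join = skew_map meet join"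
proof -
  have "x \<sqinter> y \<sqinter> (x \<squnion> y) \<sqinter> (x \<sqinter> y \<squnion> (x \<squnion> y)) = x \<sqinter> y" for x y
    by (metis meet_assoc meet_join_meet_absorb meet_join_absorb)
  moreover have "x \<sqinter> y \<sqinter> (x \<squnion> y) \<squnion> (x \<sqinter> y \<squnion> (x \<squnion> y)) = x \<squnion> y" for x y
    by (metis join_assoc join_meet_absorb' join_meet_join_absorb)
  ultimately show ?thesis
    by (simp add: skew_map_def fun_eq_iff)
qed

end

theorem mainTheorem6:
  fixes meet join :: "'a \<Rightarrow> 'a \<Rightarrow> 'a"
  assumes "skew_lattice meet join"
    and "strongly_distributive meet join"
    and "co_strongly_distributive meet join"
  shows "strong_distributive_solution meet join \<and>
         skew_map meet join \<circ> skew_map meet join \<circ> skew_map meet join = skew_map meet join"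
proof -
  interpret bi_distributive_skew_lat meet join
    using assms by unfold_locales
  show ?thesis
    unfolding strong_distributive_solution_def
    using assms(1) skew_map_is_YB_solution skew_map_cube by blast
qed

end
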